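(* For all integers $1\le k\le n$, $\hat E_{k,n}(q)$ is a polynomial in $q$ of degree $(k-1)(n-k)$, and $\hat E_{k,n}(0)$ equals the Narayana number $N_{k,n}=\frac1n\binom{n}{k}\binom{n}{k-1}$.
   Context: Place $1,\dots,n$ clockwise on a circle. Distinct $p_1,\dots,p_m$ are in clockwise cyclic order if $(p_2-p_1)\bmod n<\dots<(p_m-p_1)\bmod n$ (residues in $\{0,\dots,n-1\}$). For $\pi\in S_n$ (fixed points regarded as "counterclockwise loops"), an ordered pair $(i,j)$, $i\ne j$, is aligned if $\pi(j)\ne j$, the entries of $(i,\pi(i),\pi(j),j)$ are pairwise distinct except that possibly $i=\pi(i)$, and the distinct entries in this order are in clockwise cyclic order. An alignment is an unordered pair $\{i,j\}$ with $(i,j)$ or $(j,i)$ aligned; $\mathrm{al}(\pi)$ is their number. A weak excedence of $\pi$ is an $i$ with $\pi(i)\ge i$. $E_{k,n}(q)=\sum q^{k(n-k)-\mathrm{al}(\pi)}$ over $\pi\in S_n$ with exactly $k$ weak excedences, and $\hat E_{k,n}(q)=q^{k-n}E_{k,n}(q)$. *)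

theory Defs
  imports "HOL-Combinatorics.Permutations" "HOL-Computational_Algebra.Polynomial_FPS"
          "HOL-Computational_Algebra.Formal_Laurent_Series"
begin

text \<open>Points 1..n on a circle. A list of distinct points is in clockwise cyclic order
  if the residues (p_l - p_1) mod n, for l = 2..m, are strictly increasing.\<close>
definition cyc_order :: "nat \<Rightarrow> nat list \<Rightarrow> bool" where
  "cyc_order n ps \<longleftrightarrow> distinct ps \<and>
     sorted_wrt (<) (map (\<lambda>p. (int p - int (hd ps)) mod int n) (tl ps))"

definition aligned :: "nat \<Rightarrow> (nat \<Rightarrow> nat) \<Rightarrow> nat \<Rightarrow> nat \<Rightarrow> bool" where
  "aligned n \<pi> i j \<longleftrightarrow> i \<noteq> j \<and> \<pi> j \<noteq> j \<and>
     i \<noteq> \<pi> j \<and> \<pi> i \<noteq> \<pi> j \<and> \<pi> i \<noteq> j \<and>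
     cyc_order n (if i = \<pi> i then [i, \<pi> j, j] else [i, \<pi> i, \<pi> j, j])"

definition alignments :: "nat \<Rightarrow> (nat \<Rightarrow> nat) \<Rightarrow> nat set set" where
  "alignments n \<pi> = {{i, j} | i j. i \<in> {1..n} \<and> j \<in> {1..n} \<and> aligned n \<pi> i j}"

definition al :: "nat \<Rightarrow> (nat \<Rightarrow> nat) \<Rightarrow> nat" where
  "al n \<pi> = card (alignments n \<pi>)"

definition wex :: "nat \<Rightarrow> (nat \<Rightarrow> nat) \<Rightarrow> nat" where
  "wex n \<pi> = card {i \<in> {1..n}. \<pi> i \<ge> i}"

text \<open>E_{k,n}(q) as a Laurent polynomial (exponents a priori integers).\<close>
definition E_kn :: "nat \<Rightarrow> nat \<Rightarrow> int fls" where
  "E_kn k n = (\<Sum>\<pi> \<in> {\<pi>. \<pi> permutes {1..n} \<and> wex n \<pi> = k}.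
                 fls_X_intpow (int (k * (n - k)) - int (al n \<pi>)))"

definition Ehat_kn :: "nat \<Rightarrow> nat \<Rightarrow> int fls" where
  "Ehat_kn k n = fls_X_intpow (int k - int n) * E_kn k n"

definition narayana :: "nat \<Rightarrow> nat \<Rightarrow> real" where
  "narayana k n = (1 / real n) * real (n choose k) * real (n choose (k - 1))"

end

theory Submission
  imports Defs
begin

text \<open>
  For a permutation \<pi> of {1..n} with k weak excedances, double counting pairs of points gives
  al \<pi> + cr \<pi> + (n - k) = k (n - k), where cr \<pi> counts the pairs x < y with
  y \<le> \<pi> x < \<pi> y or \<pi> x < \<pi> y < x. Hence Ehat_kn k n is the polynomial \<Sum> q^(cr \<pi>), whose
  degree (k - 1)(n - k) is attained by the rotation i \<mapsto> i + n - k, which has no alignments.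
  Its constant term counts the permutations with cr \<pi> = 0. Deleting n + 1 from its cycle in
  such a permutation of {1..n+1} leaves one of {1..n} together with the point where n + 1 is
  spliced back in (unless n + 1 was fixed); refining the count by the number s of points
  available for splicing gives a recurrence solved by (s/n) C(n,k) C(n-s-1,n-k-1), and summing
  over s yields the Narayana number.
\<close>

section \<open>Counting filtered sets and pairs\<close>

lemma card_filter_eq_sum:
  assumes "finite A"
  shows "card {x\<in>A. P x} = (\<Sum>x\<in>A. if P x then 1 else 0)"
  using sum.inter_filter[OF assms, of "\<lambda>_. 1::nat" P] by simp

lemma card_filter_split:
  assumes "finite A"
  shows "card {x\<in>A. P x} = card {x\<in>A. P x \<and> Q x} + card {x\<in>A. P x \<and> \<not> Q x}"
proof -
  have "{x\<in>A. P x} = {x\<in>A. P x \<and> Q x} \<union> {x\<in>A. P x \<and> \<not> Q x}" by auto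
  moreover have "{x\<in>A. P x \<and> Q x} \<inter> {x\<in>A. P x \<and> \<not> Q x} = {}" by auto
  ultimately show ?thesis using assms by (simp add: card_Un_disjoint)
qed

lemma permutes_eq_iff:
  assumes "\<pi> permutes S"
  shows "\<pi> a = \<pi> b \<longleftrightarrow> a = b"
  using permutes_inj[OF assms] by (meson injD)

lemma permutes_not_less_iff:
  fixes \<pi> :: "'a::linorder \<Rightarrow> 'a"
  assumes "\<pi> permutes S" and "a \<noteq> b"
  shows "\<not> \<pi> a < \<pi> b \<longleftrightarrow> \<pi> b < \<pi> a"
  by (metis assms permutes_eq_iff linorder_neqE less_asym)

lemma card_permutes_filter:
  assumes perm: "\<pi> permutes S" and fin: "finite S"
  shows "card {x\<in>S. P (\<pi> x)} = card {x\<in>S. P x}"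
  unfolding card_filter_eq_sum[OF fin]
  using sum.permute[OF perm, of "\<lambda>x. if P x then 1 else 0", symmetric] by (simp add: comp_def)

lemma card_permutes_gap:
  fixes \<pi> :: "'a::linorder \<Rightarrow> 'a"
  assumes perm: "\<pi> permutes S" and fin: "finite S"
  shows "card {x\<in>S. x \<le> g \<and> g < \<pi> x} = card {x\<in>S. \<pi> x \<le> g \<and> g < x}"
proof -
  have "card {x\<in>S. x \<le> g} = card {x\<in>S. x \<le> g \<and> \<pi> x \<le> g} + card {x\<in>S. x \<le> g \<and> g < \<pi> x}"
    using card_filter_split[OF fin, of "\<lambda>x. x \<le> g" "\<lambda>x. \<pi> x \<le> g"] by (simp add: not_le)
  moreover have "card {x\<in>S. \<pi> x \<le> g} = card {x\<in>S. x \<le> g \<and> \<pi> x \<le> g} + card {x\<in>S. \<pi> x \<le> g \<and> g < x}"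
    using card_filter_split[OF fin, of "\<lambda>x. \<pi> x \<le> g" "\<lambda>x. x \<le> g"] by (simp add: not_le conj_commute)
  moreover have "card {x\<in>S. \<pi> x \<le> g} = card {x\<in>S. x \<le> g}"
    by (rule card_permutes_filter[OF perm fin])
  ultimately show ?thesis by linarith
qed

definition pair_count :: "nat \<Rightarrow> (nat \<Rightarrow> nat \<Rightarrow> bool) \<Rightarrow> nat" where
  "pair_count n P = card {(a, b). a \<in> {1..n} \<and> b \<in> {1..n} \<and> P a b}"

lemma pair_count_eq_sum:
  "pair_count n P = (\<Sum>a\<in>{1..n}. \<Sum>b\<in>{1..n}. if P a b then 1 else 0)"
proof -
  have "{(a, b). a \<in> {1..n} \<and> b \<in> {1..n} \<and> P a b} = {x \<in> {1..n} \<times> {1..n}. P (fst x) (snd x)}"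
    by auto
  then show ?thesis
    unfolding pair_count_def
    by (simp add: card_filter_eq_sum sum.cartesian_product case_prod_beta)
qed

lemma pair_count_rows: "pair_count n P = (\<Sum>a\<in>{1..n}. card {b\<in>{1..n}. P a b})"
  unfolding pair_count_eq_sum by (intro sum.cong refl card_filter_eq_sum[symmetric]) simp

lemma pair_count_swap: "pair_count n P = pair_count n (\<lambda>a b. P b a)"
  unfolding pair_count_eq_sum by (rule sum.swap)

lemma pair_count_cols: "pair_count n P = (\<Sum>b\<in>{1..n}. card {a\<in>{1..n}. P a b})"
  by (subst pair_count_swap) (rule pair_count_rows)

lemma pair_count_cong:
  assumes "\<And>a b. a \<in> {1..n} \<Longrightarrow> b \<in> {1..n} \<Longrightarrow> P a b \<longleftrightarrow> Q a b"
  shows "pair_count n P = pair_count n Q"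
  unfolding pair_count_def using assms by (intro arg_cong[where f = card]) auto

lemma pair_count_disj:
  assumes "\<And>a b. a \<in> {1..n} \<Longrightarrow> b \<in> {1..n} \<Longrightarrow> \<not> (P a b \<and> Q a b)"
  shows "pair_count n (\<lambda>a b. P a b \<or> Q a b) = pair_count n P + pair_count n Q"
  unfolding pair_count_eq_sum sum.distrib[symmetric] using assms by (intro sum.cong refl) auto

lemma pair_count_eq_0_iff:
  "pair_count n P = 0 \<longleftrightarrow> (\<forall>a\<in>{1..n}. \<forall>b\<in>{1..n}. \<not> P a b)"
proof -
  have "finite {(a, b). a \<in> {1..n} \<and> b \<in> {1..n} \<and> P a b}"
    by (rule finite_subset[of _ "{1..n} \<times> {1..n}"]) auto
  then show ?thesis unfolding pair_count_def by auto
qed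

lemma pair_count_product:
  "pair_count n (\<lambda>a b. P a \<and> Q b) = card {a\<in>{1..n}. P a} * card {b\<in>{1..n}. Q b}"
proof -
  have "{(a, b). a \<in> {1..n} \<and> b \<in> {1..n} \<and> P a \<and> Q b} = {a\<in>{1..n}. P a} \<times> {b\<in>{1..n}. Q b}"
    by auto
  then show ?thesis unfolding pair_count_def by (simp add: card_cartesian_product)
qed

section \<open>Alignments and crossings\<close>

lemma int_diff_mod_eq:
  assumes "1 \<le> p" "p \<le> n" "1 \<le> h" "h \<le> n"
  shows "(int p - int h) mod int n = (if h \<le> p then int p - int h else int p - int h + int n)"
proof (cases "h \<le> p")
  case True
  then show ?thesis using assms by (simp add: mod_pos_pos_trivial)
next
  case False
  have "(int p - int h) mod int n = (int p - int h + int n) mod int n" by simp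
  also have "\<dots> = int p - int h + int n" using assms False by (intro mod_pos_pos_trivial) auto
  finally show ?thesis using False by simp
qed

lemma aligned_iff:
  assumes perm: "\<pi> permutes {1..n}" and a: "a \<in> {1..n}" and b: "b \<in> {1..n}"
  shows "aligned n \<pi> a b \<longleftrightarrow> a \<noteq> b \<and>
     ((a \<le> \<pi> a \<and> \<pi> b < b \<and> (\<pi> a < \<pi> b \<or> b < a)) \<or>
     (a \<le> \<pi> a \<and> b < a \<and> \<pi> a < \<pi> b) \<or>
     (b < a \<and> \<pi> a < \<pi> b \<and> \<pi> b < b))"
proof -
  have "\<pi> a \<in> {1..n}" "\<pi> b \<in> {1..n}" using permutes_in_image[OF perm] a b by blast+
  moreover have "\<pi> a = \<pi> b \<longleftrightarrow> a = b" using permutes_inj[OF perm] by (meson injD)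
  ultimately show ?thesis
    unfolding aligned_def cyc_order_def using a b
    by (auto simp: int_diff_mod_eq[of _ n] split: if_splits)
qed

lemma aligned_asym:
  assumes p: "\<pi> permutes {1..n}" and a: "a \<in> {1..n}" and b: "b \<in> {1..n}"
    and "aligned n \<pi> a b"
  shows "\<not> aligned n \<pi> b a"
  using assms aligned_iff[OF p a b] aligned_iff[OF p b a] by auto

lemma al_eq_pair_count:
  assumes perm: "\<pi> permutes {1..n}"
  shows "al n \<pi> = pair_count n (aligned n \<pi>)"
proof -
  let ?S = "{(a, b). a \<in> {1..n} \<and> b \<in> {1..n} \<and> aligned n \<pi> a b}"
  have "inj_on (\<lambda>(a, b). {a, b}) ?S"
  proof (rule inj_onI)
    fix x y assume x: "x \<in> ?S" and y: "y \<in> ?S" and eq: "(\<lambda>(a, b). {a, b}) x = (\<lambda>(a, b). {a, b}) y"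
    obtain a b c d where xy: "x = (a, b)" "y = (c, d)" by fastforce
    have "\<not> (a = d \<and> b = c)" using x y xy aligned_asym[OF perm] by auto
    then show "x = y" using eq xy by (auto simp: doubleton_eq_iff)
  qed
  moreover have "alignments n \<pi> = (\<lambda>(a, b). {a, b}) ` ?S"
    unfolding alignments_def by auto
  ultimately show ?thesis unfolding al_def pair_count_def by (simp add: card_image)
qed

definition crossings :: "nat \<Rightarrow> (nat \<Rightarrow> nat) \<Rightarrow> nat" where
  "crossings n \<pi> = pair_count n (\<lambda>x y. x < y \<and> y \<le> \<pi> x \<and> \<pi> x < \<pi> y)
                 + pair_count n (\<lambda>x y. x < y \<and> \<pi> x < \<pi> y \<and> \<pi> y < x)"

context
  fixes n :: nat and \<pi> :: "nat \<Rightarrow> nat"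
  assumes perm: "\<pi> permutes {1..n}"
begin

lemma card_non_weak_excedences: "card {b\<in>{1..n}. \<pi> b < b} = n - wex n \<pi>"
proof -
  have "card {1..n} = card {i\<in>{1..n}. i \<le> \<pi> i} + card {i\<in>{1..n}. \<not> i \<le> \<pi> i}"
    using card_filter_split[of "{1..n}" "\<lambda>_. True" "\<lambda>i. i \<le> \<pi> i"]
    by (simp only: simp_thms Collect_mem_eq finite_atLeastAtMost)
  then show ?thesis unfolding wex_def by (simp add: not_le)
qed

lemma al_split:
  "al n \<pi> = pair_count n (\<lambda>a b. a \<le> \<pi> a \<and> \<pi> b < b \<and> (\<pi> a < \<pi> b \<or> b < a))
          + pair_count n (\<lambda>a b. a \<le> \<pi> a \<and> b < a \<and> \<pi> a < \<pi> b)
          + pair_count n (\<lambda>a b. b < a \<and> \<pi> a < \<pi> b \<and> \<pi> b < b)"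
proof -
  have "al n \<pi> = pair_count n (\<lambda>a b. ((a \<le> \<pi> a \<and> \<pi> b < b \<and> (\<pi> a < \<pi> b \<or> b < a)) \<or>
      (a \<le> \<pi> a \<and> b < a \<and> \<pi> a < \<pi> b)) \<or> (b < a \<and> \<pi> a < \<pi> b \<and> \<pi> b < b))"
    unfolding al_eq_pair_count[OF perm] by (intro pair_count_cong) (auto simp: aligned_iff[OF perm])
  then show ?thesis by (simp add: pair_count_disj)
qed

lemma pair_count_weak_excedence_times_non:
  "pair_count n (\<lambda>a b. a \<le> \<pi> a \<and> \<pi> b < b \<and> (\<pi> a < \<pi> b \<or> b < a))
   + pair_count n (\<lambda>a b. a \<le> \<pi> a \<and> \<pi> b < b \<and> a < b \<and> \<pi> b < \<pi> a)
   = wex n \<pi> * (n - wex n \<pi>)"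
proof -
  have "pair_count n (\<lambda>a b. a \<le> \<pi> a \<and> \<pi> b < b) = wex n \<pi> * (n - wex n \<pi>)"
    by (simp only: pair_count_product card_non_weak_excedences[symmetric]) (simp add: wex_def)
  moreover have "pair_count n (\<lambda>a b. a \<le> \<pi> a \<and> \<pi> b < b) = pair_count n (\<lambda>a b.
      (a \<le> \<pi> a \<and> \<pi> b < b \<and> (\<pi> a < \<pi> b \<or> b < a)) \<or> (a \<le> \<pi> a \<and> \<pi> b < b \<and> a < b \<and> \<pi> b < \<pi> a))"
  proof (rule pair_count_cong, goal_cases)
    case (1 a b)
    then show ?case using permutes_eq_iff[OF perm, of a b] by auto
  qed
  ultimately show ?thesis by (simp add: pair_count_disj)
qed

lemma pair_count_aligned_weak_plus_crossing:
  "pair_count n (\<lambda>a b. a \<le> \<pi> a \<and> b < a \<and> \<pi> a < \<pi> b)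
   + pair_count n (\<lambda>x y. x < y \<and> y \<le> \<pi> x \<and> \<pi> x < \<pi> y)
   = pair_count n (\<lambda>x y. x < y \<and> y \<le> \<pi> x \<and> y \<le> \<pi> y)"
proof -
  have "pair_count n (\<lambda>x y. x < y \<and> y \<le> \<pi> x \<and> y \<le> \<pi> y) = pair_count n (\<lambda>x y.
      (y \<le> \<pi> y \<and> x < y \<and> \<pi> y < \<pi> x) \<or> (x < y \<and> y \<le> \<pi> x \<and> \<pi> x < \<pi> y))"
  proof (rule pair_count_cong, goal_cases)
    case (1 a b)
    then show ?case using permutes_eq_iff[OF perm, of a b] by auto
  qed
  then show ?thesis by (subst (1) pair_count_swap) (simp add: pair_count_disj)
qed

lemma pair_count_aligned_strict_plus_crossing:
  "pair_count n (\<lambda>a b. b < a \<and> \<pi> a < \<pi> b \<and> \<pi> b < b)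
   + pair_count n (\<lambda>x y. x < y \<and> \<pi> x < \<pi> y \<and> \<pi> y < x)
   = pair_count n (\<lambda>x y. x < y \<and> \<pi> x < x \<and> \<pi> y < x)"
proof -
  have "pair_count n (\<lambda>x y. x < y \<and> \<pi> x < x \<and> \<pi> y < x) = pair_count n (\<lambda>x y.
      (x < y \<and> \<pi> y < \<pi> x \<and> \<pi> x < x) \<or> (x < y \<and> \<pi> x < \<pi> y \<and> \<pi> y < x))"
  proof (rule pair_count_cong, goal_cases)
    case (1 a b)
    then show ?case using permutes_eq_iff[OF perm, of a b] by auto
  qed
  then show ?thesis by (subst (1) pair_count_swap) (simp add: pair_count_disj)
qed

lemma card_inversions_balance:
  assumes b: "b \<in> {1..n}"
  shows "card {a\<in>{1..n}. a < b \<and> \<pi> b < \<pi> a} + \<pi> b = b + card {a\<in>{1..n}. b < a \<and> \<pi> a < \<pi> b}"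
proof -
  have pb: "\<pi> b \<in> {1..n}" using permutes_in_image[OF perm] b by simp
  have "{a\<in>{1..n}. a < b} = {1..<b}" "{a\<in>{1..n}. a < \<pi> b} = {1..<\<pi> b}" using b pb by auto
  then have below: "card {a\<in>{1..n}. a < b} = b - 1" and
      below_image: "card {a\<in>{1..n}. \<pi> a < \<pi> b} = \<pi> b - 1"
    using card_permutes_filter[OF perm finite_atLeastAtMost, of "\<lambda>c. c < \<pi> b"] by simp_all
  have split_b: "card {a\<in>{1..n}. a < b} =
      card {a\<in>{1..n}. a < b \<and> \<pi> a < \<pi> b} + card {a\<in>{1..n}. a < b \<and> \<not> \<pi> a < \<pi> b}"
    by (rule card_filter_split) simp
  have split_pb: "card {a\<in>{1..n}. \<pi> a < \<pi> b} =
      card {a\<in>{1..n}. \<pi> a < \<pi> b \<and> a < b} + card {a\<in>{1..n}. \<pi> a < \<pi> b \<and> \<not> a < b}"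
    by (rule card_filter_split) simp
  have eq1: "{a\<in>{1..n}. a < b \<and> \<not> \<pi> a < \<pi> b} = {a\<in>{1..n}. a < b \<and> \<pi> b < \<pi> a}"
  proof (intro Collect_cong conj_cong refl)
    fix a assume "a < b"
    then show "(\<not> \<pi> a < \<pi> b) = (\<pi> b < \<pi> a)" by (intro permutes_not_less_iff[OF perm]) simp
  qed
  have eq2: "{a\<in>{1..n}. \<pi> a < \<pi> b \<and> \<not> a < b} = {a\<in>{1..n}. b < a \<and> \<pi> a < \<pi> b}"
  proof (intro Collect_cong)
    fix a show "(a \<in> {1..n} \<and> \<pi> a < \<pi> b \<and> \<not> a < b) = (a \<in> {1..n} \<and> b < a \<and> \<pi> a < \<pi> b)"
      by (cases a b rule: linorder_cases) auto
  qed
  have eq3: "{a\<in>{1..n}. \<pi> a < \<pi> b \<and> a < b} = {a\<in>{1..n}. a < b \<and> \<pi> a < \<pi> b}"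
    by auto
  have "1 \<le> b" "1 \<le> \<pi> b" using b pb by auto
  then show ?thesis using split_b split_pb below below_image unfolding eq1 eq2 eq3 by linarith
qed

lemma pair_count_inversions_eq_descent_sum:
  "pair_count n (\<lambda>a b. a \<le> \<pi> a \<and> \<pi> b < b \<and> a < b \<and> \<pi> b < \<pi> a)
   = (\<Sum>b\<in>{b\<in>{1..n}. \<pi> b < b}. b - \<pi> b)"
proof -
  let ?M = "pair_count n (\<lambda>a b. \<pi> a < a \<and> \<pi> b < b \<and> a < b \<and> \<pi> b < \<pi> a)"
  have left: "pair_count n (\<lambda>a b. a \<le> \<pi> a \<and> \<pi> b < b \<and> a < b \<and> \<pi> b < \<pi> a) + ?M
      = (\<Sum>b\<in>{1..n}. card {a\<in>{1..n}. \<pi> b < b \<and> a < b \<and> \<pi> b < \<pi> a})"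
  proof -
    have "pair_count n (\<lambda>a b. a \<le> \<pi> a \<and> \<pi> b < b \<and> a < b \<and> \<pi> b < \<pi> a) + ?M = pair_count n (\<lambda>a b.
        (a \<le> \<pi> a \<and> \<pi> b < b \<and> a < b \<and> \<pi> b < \<pi> a) \<or> (\<pi> a < a \<and> \<pi> b < b \<and> a < b \<and> \<pi> b < \<pi> a))"
      by (rule pair_count_disj[symmetric]) auto
    also have "\<dots> = pair_count n (\<lambda>a b. \<pi> b < b \<and> a < b \<and> \<pi> b < \<pi> a)"
      by (rule pair_count_cong) auto
    finally show ?thesis by (simp only: pair_count_cols)
  qed
  have right: "?M = (\<Sum>b\<in>{1..n}. card {a\<in>{1..n}. \<pi> b < b \<and> b < a \<and> \<pi> a < \<pi> b})"
    by (subst pair_count_swap, subst pair_count_cols, intro sum.cong refl arg_cong[where f = card]) auto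
  have "card {a\<in>{1..n}. \<pi> b < b \<and> a < b \<and> \<pi> b < \<pi> a}
      = card {a\<in>{1..n}. \<pi> b < b \<and> b < a \<and> \<pi> a < \<pi> b} + (if \<pi> b < b then b - \<pi> b else 0)"
    if "b \<in> {1..n}" for b
    using card_inversions_balance[OF that] by auto
  then have "(\<Sum>b\<in>{1..n}. card {a\<in>{1..n}. \<pi> b < b \<and> a < b \<and> \<pi> b < \<pi> a})
      = ?M + (\<Sum>b\<in>{1..n}. if \<pi> b < b then b - \<pi> b else 0)"
    unfolding right sum.distrib[symmetric] by (intro sum.cong refl)
  moreover have "(\<Sum>b\<in>{b\<in>{1..n}. \<pi> b < b}. b - \<pi> b) = (\<Sum>b\<in>{1..n}. if \<pi> b < b then b - \<pi> b else 0)"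
    by (rule sum.inter_filter) simp
  ultimately show ?thesis using left by simp
qed

text \<open>Both sides count pairs of a weak excedance m and an arc crossing the gap between
  m - 1 and m, downwards on the left and upwards on the right.\<close>
lemma pair_count_descents_over_weak_excedence:
  "pair_count n (\<lambda>m b. m \<le> \<pi> m \<and> \<pi> b < m \<and> m < b)
   = pair_count n (\<lambda>x y. x < y \<and> y \<le> \<pi> x \<and> y \<le> \<pi> y)"
  unfolding pair_count_rows[of n "\<lambda>m b. m \<le> \<pi> m \<and> \<pi> b < m \<and> m < b"]
    pair_count_cols[of n "\<lambda>x y. x < y \<and> y \<le> \<pi> x \<and> y \<le> \<pi> y"]
proof (rule sum.cong[OF refl])
  fix m assume m: "m \<in> {1..n}"
  show "card {b\<in>{1..n}. m \<le> \<pi> m \<and> \<pi> b < m \<and> m < b}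
      = card {x\<in>{1..n}. x < m \<and> m \<le> \<pi> x \<and> m \<le> \<pi> m}"
  proof (cases "m \<le> \<pi> m")
    case True
    have "{b\<in>{1..n}. m \<le> \<pi> m \<and> \<pi> b < m \<and> m < b} = {b\<in>{1..n}. \<pi> b \<le> m - 1 \<and> m - 1 < b}"
    proof (rule set_eqI)
      fix b
      show "b \<in> {b\<in>{1..n}. m \<le> \<pi> m \<and> \<pi> b < m \<and> m < b} \<longleftrightarrow> b \<in> {b\<in>{1..n}. \<pi> b \<le> m - 1 \<and> m - 1 < b}"
        using True m by (cases "b = m") auto
    qed
    moreover have "{x\<in>{1..n}. x < m \<and> m \<le> \<pi> x \<and> m \<le> \<pi> m} = {x\<in>{1..n}. x \<le> m - 1 \<and> m - 1 < \<pi> x}"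
      using True m by auto
    ultimately show ?thesis using card_permutes_gap[OF perm finite_atLeastAtMost, of "m - 1"] by simp
  qed simp
qed

lemma descent_sum_eq:
  "(\<Sum>b\<in>{b\<in>{1..n}. \<pi> b < b}. b - \<pi> b) = (n - wex n \<pi>)
     + pair_count n (\<lambda>x y. x < y \<and> y \<le> \<pi> x \<and> y \<le> \<pi> y)
     + pair_count n (\<lambda>x y. x < y \<and> \<pi> x < x \<and> \<pi> y < x)"
proof -
  have "(if \<pi> b < b then b - \<pi> b else 0) =
      (if \<pi> b < b then 1 else 0) + card {m\<in>{1..n}. \<pi> b < b \<and> \<pi> b < m \<and> m < b}"
    if b: "b \<in> {1..n}" for b
  proof (cases "\<pi> b < b")
    case True
    then have "{m\<in>{1..n}. \<pi> b < b \<and> \<pi> b < m \<and> m < b} = {\<pi> b<..<b}" using b by auto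
    then show ?thesis using True by simp
  qed simp
  then have "(\<Sum>b\<in>{b\<in>{1..n}. \<pi> b < b}. b - \<pi> b)
      = (\<Sum>b\<in>{1..n}. (if \<pi> b < b then 1 else 0) + card {m\<in>{1..n}. \<pi> b < b \<and> \<pi> b < m \<and> m < b})"
    by (simp only: sum.inter_filter[OF finite_atLeastAtMost]) (rule sum.cong, simp_all)
  also have "\<dots> = card {b\<in>{1..n}. \<pi> b < b} + pair_count n (\<lambda>m b. \<pi> b < b \<and> \<pi> b < m \<and> m < b)"
    by (simp only: sum.distrib card_filter_eq_sum[OF finite_atLeastAtMost] pair_count_cols)
  also have "pair_count n (\<lambda>m b. \<pi> b < b \<and> \<pi> b < m \<and> m < b) = pair_count n (\<lambda>m b.
        (m < b \<and> \<pi> m < m \<and> \<pi> b < m) \<or> (m \<le> \<pi> m \<and> \<pi> b < m \<and> m < b))"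
    by (intro pair_count_cong) auto
  also have "\<dots> = pair_count n (\<lambda>x y. x < y \<and> \<pi> x < x \<and> \<pi> y < x)
      + pair_count n (\<lambda>x y. x < y \<and> y \<le> \<pi> x \<and> y \<le> \<pi> y)"
    by (simp add: pair_count_disj pair_count_descents_over_weak_excedence)
  finally show ?thesis using card_non_weak_excedences by linarith
qed

theorem al_crossings_identity:
  "al n \<pi> + crossings n \<pi> + (n - wex n \<pi>) = wex n \<pi> * (n - wex n \<pi>)"
  using al_split pair_count_weak_excedence_times_non pair_count_aligned_weak_plus_crossing
    pair_count_aligned_strict_plus_crossing pair_count_inversions_eq_descent_sum descent_sum_eq
  unfolding crossings_def by linarith

end

definition rotation :: "nat \<Rightarrow> nat \<Rightarrow> nat \<Rightarrow> nat" where
  "rotation n c i = (if i \<in> {1..n} then (if i + c \<le> n then i + c else i + c - n) else i)"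

context
  fixes n c :: nat
  assumes c: "c < n"
begin

lemma rotation_permutes: "rotation n c permutes {1..n}"
proof (rule bij_imp_permutes)
  have sub: "rotation n c ` {1..n} \<subseteq> {1..n}" using c by (auto simp: rotation_def)
  have inj: "inj_on (rotation n c) {1..n}"
    by (rule inj_onI) (auto simp: rotation_def split: if_splits)
  show "bij_betw (rotation n c) {1..n} {1..n}"
    using endo_inj_surj[OF _ sub inj] inj by (simp add: bij_betw_def)
  show "\<And>x. x \<notin> {1..n} \<Longrightarrow> rotation n c x = x" unfolding rotation_def by presburger
qed

lemma wex_rotation: "wex n (rotation n c) = n - c"
proof -
  have "{i \<in> {1..n}. rotation n c i \<ge> i} = {1..n - c}"
    using c by (auto simp: rotation_def)
  then show ?thesis unfolding wex_def by simp
qed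

lemma al_rotation: "al n (rotation n c) = 0"
  unfolding al_eq_pair_count[OF rotation_permutes] pair_count_eq_0_iff
  by (auto simp: aligned_iff[OF rotation_permutes] rotation_def)

end

section \<open>Inserting and removing the largest point\<close>

definition noncrossing :: "nat \<Rightarrow> (nat \<Rightarrow> nat) \<Rightarrow> bool" where
  "noncrossing m \<pi> \<longleftrightarrow> (\<forall>x\<in>{1..m}. \<forall>y\<in>{1..m}. x < y \<longrightarrow>
      \<not> (y \<le> \<pi> x \<and> \<pi> x < \<pi> y) \<and> \<not> (\<pi> x < \<pi> y \<and> \<pi> y < x))"

lemma crossings_eq_0_iff: "crossings n \<pi> = 0 \<longleftrightarrow> noncrossing n \<pi>"
  unfolding crossings_def noncrossing_def add_is_0 pair_count_eq_0_iff by blast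

lemma noncrossingD:
  assumes "noncrossing m \<pi>" "x \<in> {1..m}" "y \<in> {1..m}" "x < y"
  shows "\<not> (y \<le> \<pi> x \<and> \<pi> x < \<pi> y)" "\<not> (\<pi> x < \<pi> y \<and> \<pi> y < x)"
  using assms unfolding noncrossing_def by auto

text \<open>The points a at which m + 1 can be spliced into a non-crossing permutation of {1..m}
  by insert_top, keeping it non-crossing.\<close>
definition insertion_points :: "nat \<Rightarrow> (nat \<Rightarrow> nat) \<Rightarrow> nat set" where
  "insertion_points m \<pi> = {a \<in> {1..m}. a \<le> \<pi> a \<and> (\<forall>i\<in>{1..m}. \<not> (i < a \<and> a \<le> \<pi> i))
      \<and> (\<forall>j\<in>{1..m}. \<not> (\<pi> j < \<pi> a \<and> \<pi> a < j))}"

definition insert_top :: "nat \<Rightarrow> (nat \<Rightarrow> nat) \<Rightarrow> nat \<Rightarrow> nat \<Rightarrow> nat" where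
  "insert_top n \<pi> a = (\<lambda>x. if x = a then n + 1 else if x = n + 1 then \<pi> a else \<pi> x)"

definition remove_top :: "nat \<Rightarrow> (nat \<Rightarrow> nat) \<Rightarrow> nat \<Rightarrow> nat" where
  "remove_top n \<sigma> = (\<lambda>x. if x = inv \<sigma> (n + 1) then \<sigma> (n + 1) else if x = n + 1 then n + 1 else \<sigma> x)"

lemma insertion_points_subset: "insertion_points m \<pi> \<subseteq> {1..m}"
  unfolding insertion_points_def by auto

lemma card_insertion_points_le: "card (insertion_points m \<pi>) \<le> m"
  using card_mono[OF _ insertion_points_subset, of m \<pi>] by simp

context
  fixes n :: nat and \<pi> :: "nat \<Rightarrow> nat" and a :: nat
  assumes perm: "\<pi> permutes {1..n}" and nc: "noncrossing n \<pi>" and a: "a \<in> insertion_points n \<pi>"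
begin

lemma insertion_pointD:
  "a \<in> {1..n}" "a \<le> \<pi> a" "\<pi> a \<in> {1..n}"
  "\<And>i. i \<in> {1..n} \<Longrightarrow> \<not> (i < a \<and> a \<le> \<pi> i)"
  "\<And>j. j \<in> {1..n} \<Longrightarrow> \<not> (\<pi> j < \<pi> a \<and> \<pi> a < j)"
  using a permutes_in_image[OF perm, of a] unfolding insertion_points_def by auto

lemma insert_top_permutes: "insert_top n \<pi> a permutes {1..n+1}"
proof -
  have "insert_top n \<pi> a = \<pi> \<circ> Transposition.transpose a (n+1)"
    using permutes_not_in[OF perm, of "n+1"]
    by (auto simp: insert_top_def fun_eq_iff Transposition.transpose_def)
  moreover have "\<pi> permutes {1..n+1}" using perm by (rule permutes_subset) auto
  moreover have "Transposition.transpose a (n+1) permutes {1..n+1}"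
    using insertion_pointD(1) by (intro permutes_swap_id) auto
  ultimately show ?thesis by (simp add: permutes_compose)
qed

lemma noncrossing_insert_top: "noncrossing (n+1) (insert_top n \<pi> a)"
  unfolding noncrossing_def
proof (intro ballI impI)
  fix x y assume x: "x \<in> {1..n+1}" and y: "y \<in> {1..n+1}" and xy: "x < y"
  let ?\<sigma> = "insert_top n \<pi> a"
  show "\<not> (y \<le> ?\<sigma> x \<and> ?\<sigma> x < ?\<sigma> y) \<and> \<not> (?\<sigma> x < ?\<sigma> y \<and> ?\<sigma> y < x)"
  proof (cases "x = a")
    case True
    then show ?thesis
      using xy y insertion_pointD(3) permutes_in_image[OF perm, of y] by (auto simp: insert_top_def)
  next
    case xa: False
    then have x': "x \<in> {1..n}" and \<sigma>x: "?\<sigma> x = \<pi> x" using x xy y by (auto simp: insert_top_def)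
    consider "y = a" | "y = n+1" | "y \<in> {1..n}" "y \<noteq> a" using y by fastforce
    then show ?thesis
    proof cases
      case 1
      then show ?thesis using \<sigma>x insertion_pointD(4)[OF x'] xy permutes_in_image[OF perm, of x] x'
        by (auto simp: insert_top_def)
    next
      case 2
      then show ?thesis
        using \<sigma>x insertion_pointD(1) insertion_pointD(5)[OF x'] permutes_in_image[OF perm, of x] x'
        by (auto simp: insert_top_def)
    next
      case 3
      then show ?thesis using noncrossingD[OF nc x' _ xy] \<sigma>x by (auto simp: insert_top_def)
    qed
  qed
qed

lemma wex_insert_top: "wex (n+1) (insert_top n \<pi> a) = wex n \<pi>"
proof -
  have "{i \<in> {1..n+1}. insert_top n \<pi> a i \<ge> i} = {i \<in> {1..n}. \<pi> i \<ge> i}"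
    using insertion_pointD(1-3) by (auto simp: insert_top_def)
  then show ?thesis unfolding wex_def by simp
qed

lemma insertion_points_insert_top_subset:
  "insertion_points (n+1) (insert_top n \<pi> a) \<subseteq> {c \<in> insertion_points n \<pi>. c \<le> a}"
proof
  let ?\<sigma> = "insert_top n \<pi> a"
  fix c assume c: "c \<in> insertion_points (n+1) ?\<sigma>"
  then have c_props: "c \<le> ?\<sigma> c" "\<And>i. i \<in> {1..n+1} \<Longrightarrow> \<not> (i < c \<and> c \<le> ?\<sigma> i)"
      "\<And>j. j \<in> {1..n+1} \<Longrightarrow> \<not> (?\<sigma> j < ?\<sigma> c \<and> ?\<sigma> c < j)"
    and c_range: "c \<in> {1..n+1}"
    unfolding insertion_points_def by auto
  moreover have "c \<noteq> n+1" using c_props(1) insertion_pointD(1,3) by (auto simp: insert_top_def)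
  moreover have "\<not> a < c" using c_props(2)[of a] c_range insertion_pointD(1) by (auto simp: insert_top_def)
  ultimately have c_le: "c \<le> a" and c_in: "c \<in> {1..n}" by auto
  have "c \<in> insertion_points n \<pi>"
  proof (cases "c = a")
    case False
    then have c_less: "c < a" and \<sigma>c: "?\<sigma> c = \<pi> c" using c_le c_in by (auto simp: insert_top_def)
    have \<sigma>_other: "?\<sigma> x = \<pi> x" if "x \<in> {1..n}" "x \<noteq> a" for x
      using that by (simp add: insert_top_def)
    show ?thesis unfolding insertion_points_def
    proof (intro CollectI conjI ballI)
      show "c \<in> {1..n}" "c \<le> \<pi> c" using c_in c_props(1) \<sigma>c by auto
      fix i assume i: "i \<in> {1..n}"
      show "\<not> (i < c \<and> c \<le> \<pi> i)"
        using c_props(2)[of i] \<sigma>_other[OF i] i c_less by (cases "i = a") auto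
    next
      fix j assume j: "j \<in> {1..n}"
      show "\<not> (\<pi> j < \<pi> c \<and> \<pi> c < j)"
        using c_props(3)[of j] \<sigma>_other[OF j] \<sigma>c j c_less insertion_pointD(2) by (cases "j = a") auto
    qed
  qed (use a in simp)
  with c_le show "c \<in> {c \<in> insertion_points n \<pi>. c \<le> a}" by simp
qed

lemma insertion_points_insert_top_supset:
  "{c \<in> insertion_points n \<pi>. c \<le> a} \<subseteq> insertion_points (n+1) (insert_top n \<pi> a)"
proof
  fix c assume "c \<in> {c \<in> insertion_points n \<pi>. c \<le> a}"
  then have c: "c \<in> insertion_points n \<pi>" and ca: "c \<le> a" by auto
  show "c \<in> insertion_points (n+1) (insert_top n \<pi> a)"
  proof (cases "c = a")
    case True
    then show ?thesis using insertion_pointD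
      by (auto simp: insertion_points_def insert_top_def)
  next
    case False
    have "c \<in> {1..n}" "c \<le> \<pi> c" "\<pi> c \<in> {1..n}" using c permutes_in_image[OF perm, of c]
      unfolding insertion_points_def by auto
    moreover have "\<pi> c < \<pi> a" using insertion_pointD(2) insertion_pointD(4)[OF \<open>c \<in> {1..n}\<close>] ca False by auto
    ultimately show ?thesis using c ca False insertion_pointD(1,2)
      unfolding insertion_points_def insert_top_def by auto
  qed
qed

lemma insertion_points_insert_top:
  "insertion_points (n+1) (insert_top n \<pi> a) = {c \<in> insertion_points n \<pi>. c \<le> a}"
  using insertion_points_insert_top_subset insertion_points_insert_top_supset by (rule antisym)

end

lemma insert_top_inj:
  assumes perm1: "\<pi>1 permutes {1..n}" and perm2: "\<pi>2 permutes {1..n}"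
    and a1: "a1 \<in> {1..n}" and a2: "a2 \<in> {1..n}"
    and eq: "insert_top n \<pi>1 a1 = insert_top n \<pi>2 a2"
  shows "\<pi>1 = \<pi>2 \<and> a1 = a2"
proof -
  have "insert_top n \<pi>2 a2 a1 = n+1" using eq by (metis insert_top_def)
  then have a: "a1 = a2"
    using permutes_in_image[OF perm2, of a1] a1 by (auto simp: insert_top_def split: if_splits)
  have "\<pi>1 x = \<pi>2 x" for x
  proof -
    consider "x = a1" | "x = n+1" | "x \<noteq> a1" "x \<noteq> n+1" by blast
    then show ?thesis
    proof cases
      case 1
      then show ?thesis using fun_cong[OF eq, of "n+1"] a a1 by (simp add: insert_top_def)
    next
      case 2
      then show ?thesis using permutes_not_in[OF perm1, of x] permutes_not_in[OF perm2, of x] by simp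
    next
      case 3
      then show ?thesis using fun_cong[OF eq, of x] a by (simp add: insert_top_def)
    qed
  qed
  with a show ?thesis by auto
qed

context
  fixes n :: nat and \<sigma> :: "nat \<Rightarrow> nat"
  assumes perm: "\<sigma> permutes {1..n+1}" and nc: "noncrossing (n+1) \<sigma>" and moved: "\<sigma> (n+1) \<noteq> n+1"
begin

lemma moved_top_preimage:
  "inv \<sigma> (n+1) \<in> {1..n}" "\<sigma> (inv \<sigma> (n+1)) = n+1"
proof -
  show top: "\<sigma> (inv \<sigma> (n+1)) = n+1" using permutes_inverses(1)[OF perm] .
  then have "inv \<sigma> (n+1) \<in> {1..n+1}" using permutes_in_image[OF perm] by fastforce
  moreover have "inv \<sigma> (n+1) \<noteq> n+1" using top moved by auto
  ultimately show "inv \<sigma> (n+1) \<in> {1..n}" by auto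
qed

lemma moved_top_image: "\<sigma> (n+1) \<in> {1..n}"
  using permutes_in_image[OF perm, of "n+1"] moved by auto

lemma moved_top_image_other:
  assumes "x \<in> {1..n+1}" "x \<noteq> inv \<sigma> (n+1)"
  shows "\<sigma> x \<in> {1..n}"
proof -
  have "\<sigma> x \<noteq> n+1" using moved_top_preimage(2) assms(2) permutes_inj[OF perm] by (metis injD)
  then show ?thesis using permutes_in_image[OF perm] assms(1) by fastforce
qed

text \<open>If n+1 jumped down past a = inv \<sigma> (n+1), balancing the arcs across a - 1 would
  produce an upward arc from below a to at least a, crossing the arc a \<mapsto> n+1.\<close>
lemma moved_top_preimage_le_image: "inv \<sigma> (n+1) \<le> \<sigma> (n+1)"
proof (rule ccontr)
  let ?a = "inv \<sigma> (n+1)"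
  assume "\<not> ?a \<le> \<sigma> (n+1)"
  then have "n+1 \<in> {x\<in>{1..n+1}. \<sigma> x \<le> ?a - 1 \<and> ?a - 1 < x}" using moved_top_preimage(1) by auto
  then have "card {x\<in>{1..n+1}. \<sigma> x \<le> ?a - 1 \<and> ?a - 1 < x} \<noteq> 0" by (auto simp: card_eq_0_iff)
  then have "card {x\<in>{1..n+1}. x \<le> ?a - 1 \<and> ?a - 1 < \<sigma> x} \<noteq> 0"
    using card_permutes_gap[OF perm finite_atLeastAtMost] by simp
  then obtain x where "x \<in> {1..n+1}" "x \<le> ?a - 1" "?a - 1 < \<sigma> x"
    by (metis (no_types, lifting) card.empty empty_Collect_eq)
  then have x: "x \<in> {1..n+1}" "x < ?a" "?a \<le> \<sigma> x" using moved_top_preimage(1) by auto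
  then have "\<sigma> x < \<sigma> ?a" using moved_top_image_other[of x] moved_top_preimage(2) by auto
  then show False using noncrossingD(1)[OF nc x(1) _ x(2)] x(3) moved_top_preimage(1) by auto
qed

lemma remove_top_simps:
  "remove_top n \<sigma> (inv \<sigma> (n+1)) = \<sigma> (n+1)"
  "x \<noteq> inv \<sigma> (n+1) \<Longrightarrow> x \<noteq> n+1 \<Longrightarrow> remove_top n \<sigma> x = \<sigma> x"
  "remove_top n \<sigma> (n+1) = n+1"
  using moved_top_preimage(1) by (auto simp: remove_top_def)

lemma remove_top_permutes: "remove_top n \<sigma> permutes {1..n}"
proof -
  have "remove_top n \<sigma> = \<sigma> \<circ> Transposition.transpose (inv \<sigma> (n+1)) (n+1)"
    using moved_top_preimage by (auto simp: remove_top_def fun_eq_iff Transposition.transpose_def)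
  moreover have "Transposition.transpose (inv \<sigma> (n+1)) (n+1) permutes {1..n+1}"
    using moved_top_preimage(1) by (intro permutes_swap_id) auto
  ultimately have "remove_top n \<sigma> permutes {1..n+1}" using permutes_compose[OF _ perm] by simp
  moreover have "remove_top n \<sigma> x = x" if "x \<in> {1..n+1} - {1..n}" for x
    using that remove_top_simps(3) by (cases "x = n+1") auto
  ultimately show ?thesis by (rule permutes_superset)
qed

text \<open>Both inv \<sigma> (n+1) and y would be arcs jumping over b = \<sigma> (n+1) from below, so by
  the balance across b two arcs jump back over it from above; one of them is not n+1 and
  crosses the arc n+1 \<mapsto> b.\<close>
lemma moved_top_no_arc_over_image:
  assumes y: "y \<in> {1..n}" "y \<noteq> inv \<sigma> (n+1)"
  shows "\<not> (y \<le> \<sigma> (n+1) \<and> \<sigma> (n+1) < \<sigma> y)"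
proof
  let ?a = "inv \<sigma> (n+1)" and ?b = "\<sigma> (n+1)"
  assume yb: "y \<le> ?b \<and> ?b < \<sigma> y"
  have sub: "{?a, y} \<subseteq> {z\<in>{1..n+1}. z \<le> ?b \<and> ?b < \<sigma> z}"
    using yb y(1) moved_top_preimage moved_top_preimage_le_image moved_top_image by auto
  have "card {?a, y} = 2" using y(2) by simp
  then have "2 \<le> card {z\<in>{1..n+1}. z \<le> ?b \<and> ?b < \<sigma> z}"
    using card_mono[OF _ sub] by simp
  then have two: "2 \<le> card {z\<in>{1..n+1}. \<sigma> z \<le> ?b \<and> ?b < z}"
    using card_permutes_gap[OF perm finite_atLeastAtMost] by simp
  have "\<exists>z\<in>{z\<in>{1..n+1}. \<sigma> z \<le> ?b \<and> ?b < z}. z \<noteq> n+1"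
  proof (rule ccontr)
    assume "\<not> ?thesis"
    then have "{z\<in>{1..n+1}. \<sigma> z \<le> ?b \<and> ?b < z} \<subseteq> {n+1}" by auto
    then have "card {z\<in>{1..n+1}. \<sigma> z \<le> ?b \<and> ?b < z} \<le> 1"
      using card_mono[of "{n+1}"] by fastforce
    then show False using two by simp
  qed
  then obtain z where z: "z \<in> {1..n+1}" "\<sigma> z \<le> ?b" "?b < z" "z \<noteq> n+1" by auto
  have "\<sigma> z \<noteq> ?b" using z(4) permutes_inj[OF perm] by (metis injD)
  moreover have "z < n+1" using z(1,4) by auto
  ultimately show False using noncrossingD(2)[OF nc z(1) _ \<open>z < n+1\<close>] z(2,3) by auto
qed

lemma noncrossing_remove_top: "noncrossing n (remove_top n \<sigma>)"
  unfolding noncrossing_def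
proof (intro ballI impI)
  fix x y assume x: "x \<in> {1..n}" and y: "y \<in> {1..n}" and xy: "x < y"
  let ?a = "inv \<sigma> (n+1)" and ?\<tau> = "remove_top n \<sigma>"
  have x': "x \<in> {1..n+1}" and y': "y \<in> {1..n+1}" using x y by auto
  show "\<not> (y \<le> ?\<tau> x \<and> ?\<tau> x < ?\<tau> y) \<and> \<not> (?\<tau> x < ?\<tau> y \<and> ?\<tau> y < x)"
  proof (cases "x = ?a")
    case True
    then have "y \<noteq> ?a" using xy by auto
    then show ?thesis
      using True y moved_top_no_arc_over_image[OF y] moved_top_preimage_le_image remove_top_simps by auto
  next
    case xa: False
    show ?thesis
    proof (cases "y = ?a")
      case True
      have "\<sigma> x < \<sigma> ?a" using moved_top_image_other[OF x' xa] moved_top_preimage(2) by auto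
      then show ?thesis using True xa x xy noncrossingD(1)[OF nc x' _ xy] moved_top_preimage
          moved_top_preimage_le_image remove_top_simps by auto
    next
      case False
      then show ?thesis using noncrossingD[OF nc x' y' xy] xa x y remove_top_simps(2) by auto
    qed
  qed
qed

lemma moved_top_preimage_insertion_point: "inv \<sigma> (n+1) \<in> insertion_points n (remove_top n \<sigma>)"
  unfolding insertion_points_def
proof (intro CollectI conjI ballI)
  let ?a = "inv \<sigma> (n+1)" and ?\<tau> = "remove_top n \<sigma>"
  show "?a \<in> {1..n}" "?a \<le> ?\<tau> ?a"
    using moved_top_preimage(1) moved_top_preimage_le_image remove_top_simps(1) by auto
  fix i assume i: "i \<in> {1..n}"
  show "\<not> (i < ?a \<and> ?a \<le> ?\<tau> i)"
  proof
    assume ia: "i < ?a \<and> ?a \<le> ?\<tau> i"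
    then have "\<sigma> i < \<sigma> ?a" using moved_top_image_other[of i] i moved_top_preimage(2) by auto
    then show False using noncrossingD(1)[OF nc _ _, of i ?a] ia i moved_top_preimage(1) remove_top_simps(2)
      by auto
  qed
next
  let ?a = "inv \<sigma> (n+1)" and ?\<tau> = "remove_top n \<sigma>"
  fix j assume j: "j \<in> {1..n}"
  show "\<not> (?\<tau> j < ?\<tau> ?a \<and> ?\<tau> ?a < j)"
    using noncrossingD(2)[OF nc _ _, of j "n+1"] j remove_top_simps by (cases "j = ?a") auto
qed

lemma insert_top_remove_top: "insert_top n (remove_top n \<sigma>) (inv \<sigma> (n+1)) = \<sigma>"
  using moved_top_preimage remove_top_simps by (auto simp: insert_top_def fun_eq_iff)

end

section \<open>Counting non-crossing permutations\<close>

definition noncrossing_perms :: "nat \<Rightarrow> nat \<Rightarrow> nat \<Rightarrow> (nat \<Rightarrow> nat) set" where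
  "noncrossing_perms n k s = {\<pi>. \<pi> permutes {1..n} \<and> noncrossing n \<pi> \<and> wex n \<pi> = k
      \<and> card (insertion_points n \<pi>) = s}"

lemma finite_noncrossing_perms: "finite (noncrossing_perms n k s)"
  by (rule finite_subset[of _ "{\<pi>. \<pi> permutes {1..n}}"])
    (auto simp: noncrossing_perms_def finite_permutations)

lemma card_noncrossing_perms_0: "card (noncrossing_perms 0 k s) = (if k = 0 \<and> s = 0 then 1 else 0)"
proof -
  have "noncrossing_perms 0 k s = (if k = 0 \<and> s = 0 then {id} else {})"
    unfolding noncrossing_perms_def wex_def insertion_points_def noncrossing_def by auto
  then show ?thesis by simp
qed

lemma card_rank_eq:
  fixes B :: "nat set"
  assumes fin: "finite B"
  shows "card {a\<in>B. card {b\<in>B. b \<le> a} = s} = (if 1 \<le> s \<and> s \<le> card B then 1 else 0)"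
proof -
  define rank where "rank a = card {b\<in>B. b \<le> a}" for a
  have rank_less: "rank a < rank b" if "a \<in> B" "b \<in> B" "a < b" for a b
  proof -
    have "{c\<in>B. c \<le> a} \<subseteq> {c\<in>B. c \<le> b}" "b \<in> {c\<in>B. c \<le> b} - {c\<in>B. c \<le> a}"
      using that by auto
    then have "{c\<in>B. c \<le> a} \<subset> {c\<in>B. c \<le> b}" by blast
    then show ?thesis unfolding rank_def using fin by (intro psubset_card_mono) auto
  qed
  have inj: "inj_on rank B"
    by (rule inj_onI) (metis rank_less less_irrefl linorder_cases)
  have "rank ` B \<subseteq> {1..card B}"
  proof
    fix y assume "y \<in> rank ` B"
    then obtain a where a: "a \<in> B" "y = rank a" by auto
    then have "a \<in> {b\<in>B. b \<le> a}" by simp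
    then have "1 \<le> rank a" unfolding rank_def using fin by (simp add: Suc_le_eq card_gt_0_iff) blast
    moreover have "rank a \<le> card B" unfolding rank_def using fin by (intro card_mono) auto
    ultimately show "y \<in> {1..card B}" using a by auto
  qed
  then have image: "rank ` B = {1..card B}"
    using card_image[OF inj] by (intro card_subset_eq) auto
  have "card {a\<in>B. rank a = s} = card (rank ` {a\<in>B. rank a = s})"
    using inj by (intro card_image[symmetric]) (auto intro: inj_on_subset)
  also have "rank ` {a\<in>B. rank a = s} = {s} \<inter> rank ` B" by auto
  also have "\<dots> = {s} \<inter> {1..card B}" using image by simp
  finally show ?thesis unfolding rank_def by auto
qed

lemma permutes_Suc_fixing_top_iff:
  fixes \<sigma> :: "nat \<Rightarrow> nat"
  shows "\<sigma> permutes {1..n+1} \<and> \<sigma> (n+1) = n+1 \<longleftrightarrow> \<sigma> permutes {1..n}"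
proof
  assume fixing: "\<sigma> permutes {1..n+1} \<and> \<sigma> (n+1) = n+1"
  have "\<sigma> x = x" if "x \<in> {1..n+1} - {1..n}" for x
  proof -
    have "x = n+1" using that by auto
    then show ?thesis using fixing by simp
  qed
  with fixing show "\<sigma> permutes {1..n}" by (blast intro: permutes_superset)
next
  assume "\<sigma> permutes {1..n}"
  then show "\<sigma> permutes {1..n+1} \<and> \<sigma> (n+1) = n+1"
    using permutes_not_in[of \<sigma> "{1..n}" "n+1"] by (auto intro: permutes_subset)
qed

context
  fixes n :: nat and \<sigma> :: "nat \<Rightarrow> nat"
  assumes perm: "\<sigma> permutes {1..n}"
begin

lemma fixed_top: "\<sigma> (n+1) = n+1"
  using permutes_not_in[OF perm] by simp

lemma noncrossing_Suc_iff: "noncrossing (n+1) \<sigma> \<longleftrightarrow> noncrossing n \<sigma>"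
proof
  assume "noncrossing (n+1) \<sigma>"
  then show "noncrossing n \<sigma>" unfolding noncrossing_def by auto
next
  assume nc: "noncrossing n \<sigma>"
  show "noncrossing (n+1) \<sigma>" unfolding noncrossing_def
  proof (intro ballI impI)
    fix x y assume x: "x \<in> {1..n+1}" and y: "y \<in> {1..n+1}" and xy: "x < y"
    show "\<not> (y \<le> \<sigma> x \<and> \<sigma> x < \<sigma> y) \<and> \<not> (\<sigma> x < \<sigma> y \<and> \<sigma> y < x)"
    proof (cases "y = n+1")
      case True
      then have "\<sigma> x \<in> {1..n}" using x xy permutes_in_image[OF perm, of x] by auto
      then show ?thesis using True fixed_top xy by auto
    next
      case False
      then show ?thesis using noncrossingD[OF nc _ _ xy] x y xy by auto
    qed
  qed
qed

lemma wex_Suc: "wex (n+1) \<sigma> = wex n \<sigma> + 1"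
proof -
  have "{i \<in> {1..n+1}. \<sigma> i \<ge> i} = insert (n+1) {i \<in> {1..n}. \<sigma> i \<ge> i}"
    using fixed_top by auto
  then show ?thesis unfolding wex_def by simp
qed

lemma top_insertion_point: "n+1 \<in> insertion_points (n+1) \<sigma>"
  unfolding insertion_points_def
proof (intro CollectI conjI ballI)
  show "n+1 \<in> {1..n+1}" "n+1 \<le> \<sigma> (n+1)" using fixed_top by auto
  fix i assume "i \<in> {1..n+1}"
  then show "\<not> (i < n+1 \<and> n+1 \<le> \<sigma> i)" using permutes_in_image[OF perm, of i] by auto
next
  fix j assume "j \<in> {1..n+1}"
  then show "\<not> (\<sigma> j < \<sigma> (n+1) \<and> \<sigma> (n+1) < j)" using fixed_top by auto
qed

lemma insertion_points_Suc_mono: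
  assumes c: "c \<in> insertion_points n \<sigma>"
  shows "c \<in> insertion_points (n+1) \<sigma>"
proof -
  have c_in: "c \<in> {1..n}" "\<sigma> c \<in> {1..n}"
    using c insertion_points_subset permutes_in_image[OF perm] by blast+
  show ?thesis unfolding insertion_points_def
  proof (intro CollectI conjI ballI)
    show "c \<in> {1..n+1}" "c \<le> \<sigma> c" using c c_in unfolding insertion_points_def by auto
    fix i assume "i \<in> {1..n+1}"
    then show "\<not> (i < c \<and> c \<le> \<sigma> i)"
      using c c_in unfolding insertion_points_def by (cases "i = n+1") auto
  next
    fix j assume "j \<in> {1..n+1}"
    then show "\<not> (\<sigma> j < \<sigma> c \<and> \<sigma> c < j)"
      using c c_in fixed_top unfolding insertion_points_def by (cases "j = n+1") auto
  qed
qed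

lemma insertion_points_Suc: "insertion_points (n+1) \<sigma> = insert (n+1) (insertion_points n \<sigma>)"
proof (intro set_eqI iffI)
  fix c assume c: "c \<in> insertion_points (n+1) \<sigma>"
  show "c \<in> insert (n+1) (insertion_points n \<sigma>)"
  proof (cases "c = n+1")
    case False
    then have "c \<in> {1..n}" using c insertion_points_subset by fastforce
    then show ?thesis using c unfolding insertion_points_def by auto
  qed simp
qed (use top_insertion_point insertion_points_Suc_mono in blast)

lemma card_insertion_points_Suc: "card (insertion_points (n+1) \<sigma>) = card (insertion_points n \<sigma>) + 1"
proof -
  have "n+1 \<notin> insertion_points n \<sigma>" using insertion_points_subset by fastforce
  moreover have "finite (insertion_points n \<sigma>)" using insertion_points_subset finite_subset by blast
  ultimately show ?thesis unfolding insertion_points_Suc by simp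
qed

end

lemma noncrossing_perms_fixing_top:
  "{\<sigma> \<in> noncrossing_perms (n+1) k s. \<sigma> (n+1) = n+1}
   = (if 1 \<le> k \<and> 1 \<le> s then noncrossing_perms n (k-1) (s-1) else {})"
proof -
  have "\<sigma> \<in> noncrossing_perms (n+1) k s \<and> \<sigma> (n+1) = n+1 \<longleftrightarrow>
      1 \<le> k \<and> 1 \<le> s \<and> \<sigma> \<in> noncrossing_perms n (k-1) (s-1)" for \<sigma>
  proof (cases "\<sigma> permutes {1..n}")
    case True
    then show ?thesis
      using noncrossing_Suc_iff[OF True] wex_Suc[OF True] card_insertion_points_Suc[OF True]
        fixed_top[OF True] permutes_Suc_fixing_top_iff[of \<sigma> n]
      unfolding noncrossing_perms_def by auto
  next
    case False
    then show ?thesis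
      using permutes_Suc_fixing_top_iff[of \<sigma> n] unfolding noncrossing_perms_def by auto
  qed
  then show ?thesis by auto
qed

text \<open>By insert_top, these pairs correspond to the permutations in
  noncrossing_perms (n+1) k s that move n+1.\<close>
definition insertion_pairs :: "nat \<Rightarrow> nat \<Rightarrow> nat \<Rightarrow> ((nat \<Rightarrow> nat) \<times> nat) set" where
  "insertion_pairs n k s = (SIGMA \<pi>:{\<pi>. \<pi> permutes {1..n} \<and> noncrossing n \<pi> \<and> wex n \<pi> = k}.
      {a \<in> insertion_points n \<pi>. card {c \<in> insertion_points n \<pi>. c \<le> a} = s})"

lemma noncrossing_perms_moving_top_eq_image:
  "{\<sigma> \<in> noncrossing_perms (n+1) k s. \<sigma> (n+1) \<noteq> n+1}
   = (\<lambda>(\<pi>, a). insert_top n \<pi> a) ` insertion_pairs n k s"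
proof (intro set_eqI iffI)
  fix \<sigma> assume "\<sigma> \<in> {\<sigma> \<in> noncrossing_perms (n+1) k s. \<sigma> (n+1) \<noteq> n+1}"
  then have perm: "\<sigma> permutes {1..n+1}" and nc: "noncrossing (n+1) \<sigma>" and moved: "\<sigma> (n+1) \<noteq> n+1"
    and props: "wex (n+1) \<sigma> = k" "card (insertion_points (n+1) \<sigma>) = s"
    unfolding noncrossing_perms_def by auto
  let ?\<pi> = "remove_top n \<sigma>" and ?a = "inv \<sigma> (n+1)"
  note perm' = remove_top_permutes[OF perm nc moved] and nc' = noncrossing_remove_top[OF perm nc moved]
    and a' = moved_top_preimage_insertion_point[OF perm nc moved]
  have \<sigma>: "insert_top n ?\<pi> ?a = \<sigma>" by (rule insert_top_remove_top[OF perm nc moved])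
  have "(?\<pi>, ?a) \<in> insertion_pairs n k s"
    using perm' nc' a' props wex_insert_top[OF perm' nc' a'] insertion_points_insert_top[OF perm' nc' a']
    unfolding insertion_pairs_def \<sigma> by auto
  moreover have "\<sigma> = (\<lambda>(\<pi>, a). insert_top n \<pi> a) (?\<pi>, ?a)" using \<sigma> by simp
  ultimately show "\<sigma> \<in> (\<lambda>(\<pi>, a). insert_top n \<pi> a) ` insertion_pairs n k s"
    by (rule image_eqI[rotated])
next
  fix \<sigma> assume "\<sigma> \<in> (\<lambda>(\<pi>, a). insert_top n \<pi> a) ` insertion_pairs n k s"
  then obtain \<pi> a where \<sigma>: "\<sigma> = insert_top n \<pi> a"
    and perm: "\<pi> permutes {1..n}" and nc: "noncrossing n \<pi>" and a: "a \<in> insertion_points n \<pi>"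
    and props: "wex n \<pi> = k" "card {c \<in> insertion_points n \<pi>. c \<le> a} = s"
    unfolding insertion_pairs_def by auto
  have "\<sigma> (n+1) \<noteq> n+1" using insertion_pointD(1,3)[OF perm nc a] \<sigma> by (auto simp: insert_top_def)
  then show "\<sigma> \<in> {\<sigma> \<in> noncrossing_perms (n+1) k s. \<sigma> (n+1) \<noteq> n+1}"
    using insert_top_permutes[OF perm nc a] noncrossing_insert_top[OF perm nc a] props
      wex_insert_top[OF perm nc a] insertion_points_insert_top[OF perm nc a]
    unfolding noncrossing_perms_def \<sigma> by auto
qed

lemma card_insertion_pairs:
  "card (insertion_pairs n k s) = (if 1 \<le> s then (\<Sum>r\<in>{s..n}. card (noncrossing_perms n k r)) else 0)"
proof -
  let ?A = "{\<pi>. \<pi> permutes {1..n} \<and> noncrossing n \<pi> \<and> wex n \<pi> = k}"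
  have fin_points: "finite (insertion_points n \<pi>)" for \<pi>
    using insertion_points_subset finite_subset by blast
  have "card (insertion_pairs n k s)
      = (\<Sum>\<pi>\<in>?A. card {a \<in> insertion_points n \<pi>. card {c \<in> insertion_points n \<pi>. c \<le> a} = s})"
    unfolding insertion_pairs_def
    by (rule card_SigmaI) (auto simp: fin_points intro: finite_subset[OF _ finite_permutations])
  also have "\<dots> = (\<Sum>\<pi>\<in>?A. if 1 \<le> s \<and> s \<le> card (insertion_points n \<pi>) then 1 else 0)"
    using card_rank_eq[OF fin_points] by (intro sum.cong refl)
  also have "\<dots> = card {\<pi>\<in>?A. 1 \<le> s \<and> s \<le> card (insertion_points n \<pi>)}"
    by (rule card_filter_eq_sum[symmetric]) (auto intro: finite_subset[OF _ finite_permutations])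
  also have "\<dots> = (if 1 \<le> s then (\<Sum>r\<in>{s..n}. card (noncrossing_perms n k r)) else 0)"
  proof (cases "1 \<le> s")
    case True
    have "{\<pi>\<in>?A. 1 \<le> s \<and> s \<le> card (insertion_points n \<pi>)} = (\<Union>r\<in>{s..n}. noncrossing_perms n k r)"
      unfolding noncrossing_perms_def using True card_insertion_points_le by fastforce
    moreover have "card (\<Union>r\<in>{s..n}. noncrossing_perms n k r) = (\<Sum>r\<in>{s..n}. card (noncrossing_perms n k r))"
      by (rule card_UN_disjoint) (simp_all add: finite_noncrossing_perms, auto simp: noncrossing_perms_def)
    ultimately show ?thesis using True by simp
  qed simp
  finally show ?thesis .
qed

lemma card_noncrossing_perms_moving_top:
  "card {\<sigma> \<in> noncrossing_perms (n+1) k s. \<sigma> (n+1) \<noteq> n+1}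
   = (if 1 \<le> s then (\<Sum>r\<in>{s..n}. card (noncrossing_perms n k r)) else 0)"
proof -
  have "inj_on (\<lambda>(\<pi>, a). insert_top n \<pi> a) (insertion_pairs n k s)"
  proof (rule inj_onI, clarify)
    fix \<pi>1 a1 \<pi>2 a2
    assume "(\<pi>1, a1) \<in> insertion_pairs n k s" "(\<pi>2, a2) \<in> insertion_pairs n k s"
      and "insert_top n \<pi>1 a1 = insert_top n \<pi>2 a2"
    then show "\<pi>1 = \<pi>2 \<and> a1 = a2"
      using insert_top_inj insertion_points_subset unfolding insertion_pairs_def by blast
  qed
  then show ?thesis
    unfolding noncrossing_perms_moving_top_eq_image by (simp add: card_image card_insertion_pairs)
qed

lemma card_noncrossing_perms_Suc:
  "card (noncrossing_perms (n+1) k s)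
   = (if 1 \<le> k \<and> 1 \<le> s then card (noncrossing_perms n (k-1) (s-1)) else 0)
     + (if 1 \<le> s then (\<Sum>r\<in>{s..n}. card (noncrossing_perms n k r)) else 0)"
proof -
  have "noncrossing_perms (n+1) k s = {\<sigma> \<in> noncrossing_perms (n+1) k s. \<sigma> (n+1) = n+1}
      \<union> {\<sigma> \<in> noncrossing_perms (n+1) k s. \<sigma> (n+1) \<noteq> n+1}"
    by auto
  then have "card (noncrossing_perms (n+1) k s) = card {\<sigma> \<in> noncrossing_perms (n+1) k s. \<sigma> (n+1) = n+1}
      + card {\<sigma> \<in> noncrossing_perms (n+1) k s. \<sigma> (n+1) \<noteq> n+1}"
    using finite_noncrossing_perms[of "n+1" k s] by (subst card_Un_disjoint[symmetric]) auto
  then show ?thesis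
    unfolding noncrossing_perms_fixing_top card_noncrossing_perms_moving_top by simp
qed

text \<open>Closed forms for card (noncrossing_perms n k s) and for its tail sum over s' \<ge> s;
  real-valued so that the division by n can be written directly.\<close>
definition noncrossing_count :: "nat \<Rightarrow> nat \<Rightarrow> nat \<Rightarrow> real" where
  "noncrossing_count n k s =
     (if k < n then
        (if s \<le> k then real s * real (n choose k) * real ((n - s - 1) choose (n - k - 1)) / real n
         else 0)
      else if k = n then (if s = n then 1 else 0) else 0)"

definition noncrossing_tail :: "nat \<Rightarrow> nat \<Rightarrow> nat \<Rightarrow> real" where
  "noncrossing_tail n k s =
     (if k < n then
        (if s \<le> k then real (n choose k) *
           (real s * real ((n - s) choose (n - k)) + real ((n - s) choose (n - k + 1))) / real n
         else 0)
      else if k = n then (if s \<le> n then 1 else 0) else 0)"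

lemma noncrossing_tail_unfold_generic:
  assumes sk: "s < k" and kn: "k < n"
  shows "noncrossing_tail n k s = noncrossing_count n k s + noncrossing_tail n k (Suc s)"
proof -
  define m where "m = n - k"
  define a where "a = n - s - 1"
  have m1: "m \<ge> 1" using kn by (simp add: m_def)
  have am: "n - s = Suc a" using sk kn by (simp add: a_def)
  have am2: "n - Suc s = a" by (simp add: a_def)
  have p1: "(Suc a choose m) = (a choose (m - 1)) + (a choose m)"
    using m1 by (metis Suc_diff_1 binomial_Suc_Suc less_le_trans zero_less_one)
  have p2: "(Suc a choose (m + 1)) = (a choose m) + (a choose (m+1))"
    by simp
  have e1: "n - k = m" "n - k - 1 = m - 1" "n - k + 1 = m + 1" by (simp_all add: m_def)
  show ?thesis
    unfolding noncrossing_tail_def noncrossing_count_def using sk kn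
    apply (simp only: if_True if_False e1 am am2 less_imp_le Suc_leI refl)
    apply (simp add: p1 p2 field_simps)
    done
qed

lemma noncrossing_tail_unfold:
  assumes "s \<le> n"
  shows "noncrossing_tail n k s = noncrossing_count n k s + noncrossing_tail n k (Suc s)"
proof -
  consider "k < n" "s < k" | "k < n" "s = k" | "k < n" "k < s" | "k = n" | "n < k" by linarith
  then show ?thesis
  proof cases
    case 1
    then show ?thesis using noncrossing_tail_unfold_generic[OF 1(2) 1(1)] by blast
  next
    case 2
    then have "n - k - 1 = n - Suc k" by simp
    then show ?thesis using 2 by (simp add: noncrossing_tail_def noncrossing_count_def)
  qed (use assms in \<open>auto simp: noncrossing_tail_def noncrossing_count_def\<close>)
qed

lemma sum_nc_count_eq_nc_tail: "(\<Sum>r\<in>{s..n}. noncrossing_count n k r) = noncrossing_tail n k s"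
proof (cases "s \<le> n + 1")
  case True
  then show ?thesis
  proof (induction s rule: inc_induct)
    case base
    then show ?case by (simp add: noncrossing_tail_def)
  next
    case (step s)
    then have "(\<Sum>r\<in>{s..n}. noncrossing_count n k r)
        = noncrossing_count n k s + (\<Sum>r\<in>{Suc s..n}. noncrossing_count n k r)"
      by (intro sum.atLeast_Suc_atMost) simp
    then show ?case using step noncrossing_tail_unfold[of s n k] by simp
  qed
qed (simp add: noncrossing_tail_def)

lemma Suc_times_binomial_Suc_eq_diff_times:
  "Suc k * (n choose Suc k) = (n - k) * (n choose k)"
  using binomial_absorption[of k n] binomial_absorb_comp[of n k] by simp

lemma noncrossing_count_Suc_identity:
  fixes k m s X Y Z W :: real
  assumes "k * Z = (m + 1) * X" and "(m + 1) * W = (k - s) * Y" and "k > 0" and "m \<ge> 0"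
  shows "s * (Z + X) * Y / (k + m + 1) = (s - 1) * X * Y / (k + m) + Z * (s * Y + W) / (k + m)"
proof -
  have "k * (m + 1) * (s * (Z + X) * Y * (k + m) - ((s - 1) * X * Y + Z * (s * Y + W)) * (k + m + 1)) = 0"
    using assms(1,2) by algebra
  then have "s * (Z + X) * Y * (k + m) = ((s - 1) * X * Y + Z * (s * Y + W)) * (k + m + 1)"
    using assms(3,4) by simp
  then have "s * (Z + X) * Y / (k + m + 1) = ((s - 1) * X * Y + Z * (s * Y + W)) / (k + m)"
    using assms(3,4) by (simp add: frac_eq_eq)
  then show ?thesis by (simp add: add_divide_distrib)
qed

lemma noncrossing_count_Suc_generic:
  assumes s1: "1 \<le> s" and sk: "s \<le> k" and kn: "k < n"
  shows "noncrossing_count (Suc n) k s = noncrossing_count n (k-1) (s-1) + noncrossing_tail n k s"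
proof -
  define m where "m = n - k"
  define a where "a = n - s"
  define X where "X = real (n choose (k-1))"
  define Y where "Y = real (a choose m)"
  define Z where "Z = real (n choose k)"
  define W where "W = real (a choose (m+1))"
  have k1: "k \<ge> 1" using s1 sk by simp
  have "Suc n choose k = (n choose (k-1)) + (n choose k)"
    using k1 by (metis Suc_diff_1 binomial_Suc_Suc less_le_trans zero_less_one)
  then have lhs: "noncrossing_count (Suc n) k s = real s * (Z + X) * Y / (real k + real m + 1)"
    using sk kn unfolding noncrossing_count_def X_def Y_def Z_def a_def m_def by (simp add: ac_simps)
  have "n - (s - 1) - 1 = a" "n - (k - 1) - 1 = m" "k - 1 < n" "s - 1 \<le> k - 1"
    using s1 k1 sk kn by (auto simp: a_def m_def)
  then have "noncrossing_count n (k-1) (s-1) = (real s - 1) * X * Y / (real k + real m)"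
    using s1 kn unfolding noncrossing_count_def X_def Y_def by (simp add: of_nat_diff m_def)
  moreover have "noncrossing_tail n k s = Z * (real s * Y + W) / (real k + real m)"
    using sk kn unfolding noncrossing_tail_def Z_def Y_def W_def a_def m_def by simp
  moreover have "real k * Z = (real m + 1) * X"
  proof -
    have "k * (n choose k) = (m + 1) * (n choose (k - 1))"
      using Suc_times_binomial_Suc_eq_diff_times[of "k - 1" n] k1 kn by (simp add: m_def Suc_diff_le)
    then have "real k * Z = real (m + 1) * X" unfolding X_def Z_def by (metis of_nat_mult)
    then show ?thesis by simp
  qed
  moreover have "(real m + 1) * W = (real k - real s) * Y"
  proof -
    have "(m + 1) * (a choose (m + 1)) = (k - s) * (a choose m)"
      using Suc_times_binomial_Suc_eq_diff_times[of m a] sk kn by (simp add: a_def m_def)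
    then have "real (m + 1) * W = real (k - s) * Y" unfolding W_def Y_def by (metis of_nat_mult)
    then show ?thesis using sk by (simp add: of_nat_diff add.commute)
  qed
  ultimately show ?thesis using lhs k1 noncrossing_count_Suc_identity[of "real k" Z "real m" X W "real s" Y]
    by simp
qed

lemma noncrossing_count_Suc:
  "noncrossing_count (Suc n) k s = (if 1 \<le> k \<and> 1 \<le> s then noncrossing_count n (k-1) (s-1) else 0)
     + (if 1 \<le> s then noncrossing_tail n k s else 0)"
proof -
  consider "s = 0" | "1 \<le> s" "k = 0" | "1 \<le> s" "Suc n \<le> k"
    | "1 \<le> s" "1 \<le> k" "k = n" | "1 \<le> s" "1 \<le> k" "k < n" "s \<le> k" | "1 \<le> s" "1 \<le> k" "k < n" "k < s"
    by linarith
  then show ?thesis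
  proof cases
    case 4
    show ?thesis
    proof (cases "s \<le> n")
      case True
      have lhs: "noncrossing_count (Suc n) k s = real s" using 4 True by (simp add: noncrossing_count_def)
      have "n - (s - 1) - 1 = n - s" "n - (n - 1) - 1 = 0" "n - 1 < n" "s - 1 \<le> n - 1"
        "n choose (n - 1) = n"
        using 4 True binomial_symmetric[of 1 n] by auto
      then have "noncrossing_count n (k-1) (s-1) = real s - 1"
        using 4 by (simp add: noncrossing_count_def of_nat_diff)
      moreover have "noncrossing_tail n k s = 1" using 4 True by (simp add: noncrossing_tail_def)
      ultimately show ?thesis using lhs 4 by simp
    qed (use 4 in \<open>simp add: noncrossing_count_def noncrossing_tail_def\<close>)
  next
    case 5
    then show ?thesis using noncrossing_count_Suc_generic by simp
  qed (auto simp: noncrossing_count_def noncrossing_tail_def)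
qed

theorem card_noncrossing_perms: "real (card (noncrossing_perms n k s)) = noncrossing_count n k s"
proof (induction n arbitrary: k s)
  case 0
  then show ?case by (simp add: card_noncrossing_perms_0 noncrossing_count_def)
next
  case (Suc n)
  have "real (card (noncrossing_perms (n+1) k s))
      = (if 1 \<le> k \<and> 1 \<le> s then real (card (noncrossing_perms n (k-1) (s-1))) else 0)
        + (if 1 \<le> s then (\<Sum>r\<in>{s..n}. real (card (noncrossing_perms n k r))) else 0)"
    unfolding card_noncrossing_perms_Suc by simp
  also have "\<dots> = noncrossing_count (Suc n) k s"
    unfolding noncrossing_count_Suc using Suc.IH sum_nc_count_eq_nc_tail by simp
  finally show ?case by simp
qed

lemma card_noncrossing_wex_eq_narayana:
  assumes "1 \<le> k" and "k \<le> n"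
  shows "real (card {\<pi>. \<pi> permutes {1..n} \<and> wex n \<pi> = k \<and> crossings n \<pi> = 0}) = narayana k n"
proof -
  have "{\<pi>. \<pi> permutes {1..n} \<and> wex n \<pi> = k \<and> crossings n \<pi> = 0} = (\<Union>s\<in>{0..n}. noncrossing_perms n k s)"
    unfolding noncrossing_perms_def crossings_eq_0_iff using card_insertion_points_le by fastforce
  moreover have "card (\<Union>s\<in>{0..n}. noncrossing_perms n k s) = (\<Sum>s\<in>{0..n}. card (noncrossing_perms n k s))"
    by (rule card_UN_disjoint) (simp_all add: finite_noncrossing_perms, auto simp: noncrossing_perms_def)
  ultimately have "real (card {\<pi>. \<pi> permutes {1..n} \<and> wex n \<pi> = k \<and> crossings n \<pi> = 0})
      = noncrossing_tail n k 0"
    by (simp add: card_noncrossing_perms sum_nc_count_eq_nc_tail)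
  also have "\<dots> = narayana k n"
  proof (cases "k < n")
    case True
    have "n - (k - 1) = n - k + 1" using assms by simp
    moreover have "n choose (k - 1) = n choose (n - (k - 1))" using assms by (intro binomial_symmetric) simp
    ultimately have "n choose (n - k + 1) = n choose (k - 1)" by (simp only:)
    then show ?thesis using True unfolding noncrossing_tail_def narayana_def by simp
  next
    case False
    then have "k = n" using assms by simp
    moreover have "n choose (n - 1) = n" using binomial_symmetric[of 1 n] assms \<open>k = n\<close> by simp
    ultimately show ?thesis using assms unfolding noncrossing_tail_def narayana_def by simp
  qed
  finally show ?thesis .
qed

section \<open>The polynomial\<close>

lemma fps_to_fls_sum: "fps_to_fls (sum f A) = (\<Sum>x\<in>A. fps_to_fls (f x))"
  by (induction A rule: infinite_finite_induct) auto

definition crossing_poly :: "nat \<Rightarrow> nat \<Rightarrow> int poly" where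
  "crossing_poly k n = (\<Sum>\<pi> | \<pi> permutes {1..n} \<and> wex n \<pi> = k. monom 1 (crossings n \<pi>))"

lemma finite_permutations_wex: "finite {\<pi>. \<pi> permutes {1..n} \<and> wex n \<pi> = k}"
  by (rule finite_subset[of _ "{\<pi>. \<pi> permutes {1..n}}"]) (auto simp: finite_permutations)

lemma coeff_crossing_poly:
  "coeff (crossing_poly k n) d = int (card {\<pi>. \<pi> permutes {1..n} \<and> wex n \<pi> = k \<and> crossings n \<pi> = d})"
proof -
  have "coeff (crossing_poly k n) d
      = (\<Sum>\<pi> | \<pi> permutes {1..n} \<and> wex n \<pi> = k. if crossings n \<pi> = d then 1 else 0)"
    unfolding crossing_poly_def by (simp add: coeff_sum coeff_monom)
  also have "\<dots> = int (\<Sum>\<pi> | \<pi> permutes {1..n} \<and> wex n \<pi> = k. if crossings n \<pi> = d then 1 else 0)"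
    unfolding of_nat_sum by (intro sum.cong refl) simp
  also have "\<dots> = int (card {\<pi>. \<pi> permutes {1..n} \<and> wex n \<pi> = k \<and> crossings n \<pi> = d})"
    using card_filter_eq_sum[OF finite_permutations_wex[of n k], of "\<lambda>\<pi>. crossings n \<pi> = d"]
    by (simp add: conj_assoc)
  finally show ?thesis .
qed

lemma crossings_le_wex:
  assumes "\<pi> permutes {1..n}"
  shows "crossings n \<pi> \<le> (wex n \<pi> - 1) * (n - wex n \<pi>)"
  using al_crossings_identity[OF assms] by (simp add: diff_mult_distrib)

lemma crossings_rotation:
  assumes "c < n"
  shows "crossings n (rotation n c) = (n - c - 1) * c"
  using al_crossings_identity[OF rotation_permutes[OF assms]] assms
  by (simp add: wex_rotation al_rotation diff_mult_distrib)

lemma degree_crossing_poly: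
  assumes "1 \<le> k" "k \<le> n"
  shows "degree (crossing_poly k n) = (k - 1) * (n - k)"
proof (rule antisym)
  show "degree (crossing_poly k n) \<le> (k - 1) * (n - k)"
  proof (rule degree_le, intro allI impI)
    fix i assume "(k - 1) * (n - k) < i"
    then have "{\<pi>. \<pi> permutes {1..n} \<and> wex n \<pi> = k \<and> crossings n \<pi> = i} = {}"
      using crossings_le_wex by fastforce
    then show "coeff (crossing_poly k n) i = 0"
      unfolding coeff_crossing_poly by (simp only: card.empty of_nat_0)
  qed
next
  have c: "n - k < n" using assms by simp
  have "rotation n (n - k) \<in> {\<pi>. \<pi> permutes {1..n} \<and> wex n \<pi> = k \<and> crossings n \<pi> = (k - 1) * (n - k)}"
    using assms rotation_permutes[OF c] wex_rotation[OF c] crossings_rotation[OF c] by simp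
  then have "coeff (crossing_poly k n) ((k - 1) * (n - k)) \<noteq> 0"
    unfolding coeff_crossing_poly using finite_permutations_wex[of n k]
    by (auto simp: card_eq_0_iff elim: finite_subset[rotated])
  then show "(k - 1) * (n - k) \<le> degree (crossing_poly k n)" by (rule le_degree)
qed

lemma poly_crossing_poly_0:
  assumes "1 \<le> k" "k \<le> n"
  shows "real_of_int (poly (crossing_poly k n) 0) = narayana k n"
  using card_noncrossing_wex_eq_narayana[OF assms] by (simp add: poly_0_coeff_0 coeff_crossing_poly)

lemma Ehat_kn_eq_crossing_poly:
  assumes "k \<le> n"
  shows "Ehat_kn k n = fps_to_fls (fps_of_poly (crossing_poly k n))"
proof -
  have exponent: "int k - int n + (int (k * (n - k)) - int (al n \<pi>)) = int (crossings n \<pi>)"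
    if "\<pi> \<in> {\<pi>. \<pi> permutes {1..n} \<and> wex n \<pi> = k}" for \<pi>
  proof -
    from that have perm: "\<pi> permutes {1..n}" and "wex n \<pi> = k" by auto
    then have "al n \<pi> + crossings n \<pi> + (n - k) = k * (n - k)"
      using al_crossings_identity[OF perm] by simp
    then have "int (al n \<pi>) + int (crossings n \<pi>) + (int n - int k) = int (k * (n - k))"
      using assms by (metis of_nat_add of_nat_diff)
    then show ?thesis by linarith
  qed
  have "Ehat_kn k n = (\<Sum>\<pi> | \<pi> permutes {1..n} \<and> wex n \<pi> = k. fls_X_intpow (int (crossings n \<pi>)))"
    unfolding Ehat_kn_def E_kn_def sum_distrib_left
    by (rule sum.cong[OF refl]) (simp only: fls_X_intpow_times_fls_X_intpow exponent)
  also have "\<dots> = fps_to_fls (fps_of_poly (crossing_poly k n))"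
    unfolding crossing_poly_def fps_of_poly_sum fps_to_fls_sum
    by (intro sum.cong refl) (simp add: fps_of_poly_monom' fps_to_fls_power fls_X_power_conv_shift_1)
  finally show ?thesis .
qed

theorem mainTheorem13:
  fixes k n :: nat
  assumes "1 \<le> k" and "k \<le> n"
  shows "\<exists>p :: int poly. Ehat_kn k n = fps_to_fls (fps_of_poly p) \<and>
           degree p = (k - 1) * (n - k) \<and> real_of_int (poly p 0) = narayana k n"
  using Ehat_kn_eq_crossing_poly[OF assms(2)] degree_crossing_poly[OF assms]
    poly_crossing_poly_0[OF assms] by blast

end
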